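(* Let $\Omega$ be an infinite set, $w:\Omega\to\mathbb R^{+}$ a function with strictly positive values, and $I$ a fine ideal of $\mathfrak F=\mathfrak F(\mathcal P_{fin}(\Omega),\mathbb R)$. Let $\mathcal R_I=\mathfrak F/I$ and $J_I:\mathfrak F\to\mathcal R_I$, $J_I(\varphi)=\varphi+I$, the canonical projection. For $A\subseteq\Omega$ and $u:A\to\mathbb R$ put $\sum_{\omega\in A}u(\omega):=J_I\big(\lambda\mapsto\sum_{\omega\in A\cap\lambda}u(\omega)\big)$, and define $$P_I(A)=\frac{\sum_{\omega\in A}w(\omega)}{\sum_{\omega\in\Omega}w(\omega)}.$$ Then $\mathcal R_I$ is a superreal field (with $\mathbb R$ embedded via constant functions), and $(\Omega,P_I,J_I)$ is a NAP-space, i.e. it satisfies (NAP0)–(NAP4).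
   Context: $\mathcal P_{fin}(\Omega)$ denotes the set of finite subsets of $\Omega$, and $\mathfrak F(\mathcal P_{fin}(\Omega),\mathbb R)$ the real algebra of all functions $\mathcal P_{fin}(\Omega)\to\mathbb R$ with pointwise operations. For $\omega\in\Omega$, $\chi_\lambda(\omega)=1$ if $\omega\in\lambda$ and $0$ otherwise. An ideal $I$ of $\mathfrak F$ is fine if it is maximal and, for every $\omega\in\Omega$, $\lambda\mapsto1-\chi_\lambda(\omega)$ belongs to $I$. A superreal field is an ordered field containing $\mathbb R$ as an ordered subfield. The NAP axioms for a triple $(\Omega,P,J)$ with $P:\mathcal P(\Omega)\to\mathcal R$ ($\mathcal R$ a superreal field) and $J:\mathfrak F\to\mathcal R$ an algebra homomorphism are: (NAP0) $P$ is defined on all of $\mathcal P(\Omega)$ with values in the superreal field $\mathcal R$; (NAP1) $P(A)\ge0$; (NAP2) $P(A)=1$ iff $A=\Omega$; (NAP3) $P(A\cup B)=P(A)+P(B)$ when $A\cap B=\varnothing$; (NAP4) with $P(A\mid B)=P(A\cap B)/P(B)$ for $B\ne\varnothing$, $P(A\mid\lambda)\in\mathbb R$ for all nonempty finite $\lambda$ and all $A$, and $P(A)=J(\varphi_A)$ where $\varphi_A(\lambda)=P(A\mid\lambda)$ for nonempty finite $\lambda$ ($\varphi_A(\varnothing)$ arbitrary). *)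

theory Defs
  imports Complex_Main "HOL-Algebra.QuotRing"
begin

definition Pfin :: "'a set \<Rightarrow> 'a set set" where
  "Pfin \<Omega> = {L. finite L \<and> L \<subseteq> \<Omega>}"

text \<open>A function on Pfin(Omega) is represented by a function on all sets that
  vanishes outside Pfin(Omega).\<close>
definition FF :: "'a set \<Rightarrow> ('a set \<Rightarrow> real) ring" where
  "FF \<Omega> = \<lparr> carrier = {f. \<forall>L. L \<notin> Pfin \<Omega> \<longrightarrow> f L = 0},
            mult = (\<lambda>f g L. f L * g L),
            one = (\<lambda>L. if L \<in> Pfin \<Omega> then 1 else 0),
            zero = (\<lambda>L. 0),
            add = (\<lambda>f g L. f L + g L) \<rparr>"

definition onPfin :: "'a set \<Rightarrow> ('a set \<Rightarrow> real) \<Rightarrow> ('a set \<Rightarrow> real)" where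
  "onPfin \<Omega> f = (\<lambda>L. if L \<in> Pfin \<Omega> then f L else 0)"

definition constF :: "'a set \<Rightarrow> real \<Rightarrow> ('a set \<Rightarrow> real)" where
  "constF \<Omega> r = onPfin \<Omega> (\<lambda>_. r)"

definition scaleF :: "real \<Rightarrow> ('a set \<Rightarrow> real) \<Rightarrow> ('a set \<Rightarrow> real)" where
  "scaleF r f = (\<lambda>L. r * f L)"

definition chi :: "'a set \<Rightarrow> 'a \<Rightarrow> real" where
  "chi L \<omega> = (if \<omega> \<in> L then 1 else 0)"

definition fine_ideal :: "'a set \<Rightarrow> ('a set \<Rightarrow> real) set \<Rightarrow> bool" where
  "fine_ideal \<Omega> I \<longleftrightarrow> maximalideal I (FF \<Omega>) \<and>
     (\<forall>\<omega>\<in>\<Omega>. onPfin \<Omega> (\<lambda>L. 1 - chi L \<omega>) \<in> I)"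

definition RI :: "'a set \<Rightarrow> ('a set \<Rightarrow> real) set \<Rightarrow> ('a set \<Rightarrow> real) set ring" where
  "RI \<Omega> I = FF \<Omega> Quot I"

definition JI :: "'a set \<Rightarrow> ('a set \<Rightarrow> real) set \<Rightarrow> ('a set \<Rightarrow> real) \<Rightarrow> ('a set \<Rightarrow> real) set" where
  "JI \<Omega> I \<phi> = I +>\<^bsub>FF \<Omega>\<^esub> \<phi>"

definition RI_le :: "('a set \<Rightarrow> real) set \<Rightarrow> ('a set \<Rightarrow> real) set \<Rightarrow> bool" where
  "RI_le X Y \<longleftrightarrow> (\<exists>\<phi>\<in>X. \<exists>\<psi>\<in>Y. \<forall>L. \<phi> L \<le> \<psi> L)"

definition embI :: "'a set \<Rightarrow> ('a set \<Rightarrow> real) set \<Rightarrow> real \<Rightarrow> ('a set \<Rightarrow> real) set" where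
  "embI \<Omega> I r = JI \<Omega> I (constF \<Omega> r)"

definition sumI :: "'a set \<Rightarrow> ('a set \<Rightarrow> real) set \<Rightarrow> 'a set \<Rightarrow> ('a \<Rightarrow> real) \<Rightarrow> ('a set \<Rightarrow> real) set" where
  "sumI \<Omega> I A u = JI \<Omega> I (onPfin \<Omega> (\<lambda>L. \<Sum>\<omega>\<in>A \<inter> L. u \<omega>))"

definition PI :: "'a set \<Rightarrow> ('a set \<Rightarrow> real) set \<Rightarrow> ('a \<Rightarrow> real) \<Rightarrow> 'a set \<Rightarrow> ('a set \<Rightarrow> real) set" where
  "PI \<Omega> I w A = sumI \<Omega> I A w \<otimes>\<^bsub>RI \<Omega> I\<^esub> inv\<^bsub>RI \<Omega> I\<^esub> (sumI \<Omega> I \<Omega> w)"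

definition superreal_field :: "('b, 'c) ring_scheme \<Rightarrow> ('b \<Rightarrow> 'b \<Rightarrow> bool) \<Rightarrow> (real \<Rightarrow> 'b) \<Rightarrow> bool" where
  "superreal_field Q leq emb \<longleftrightarrow>
     field Q \<and>
     (\<forall>x\<in>carrier Q. leq x x) \<and>
     (\<forall>x\<in>carrier Q. \<forall>y\<in>carrier Q. leq x y \<and> leq y x \<longrightarrow> x = y) \<and>
     (\<forall>x\<in>carrier Q. \<forall>y\<in>carrier Q. \<forall>z\<in>carrier Q. leq x y \<and> leq y z \<longrightarrow> leq x z) \<and>
     (\<forall>x\<in>carrier Q. \<forall>y\<in>carrier Q. leq x y \<or> leq y x) \<and>
     (\<forall>x\<in>carrier Q. \<forall>y\<in>carrier Q. \<forall>z\<in>carrier Q. leq x y \<longrightarrow> leq (x \<oplus>\<^bsub>Q\<^esub> z) (y \<oplus>\<^bsub>Q\<^esub> z)) \<and>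
     (\<forall>x\<in>carrier Q. \<forall>y\<in>carrier Q. leq \<zero>\<^bsub>Q\<^esub> x \<and> leq \<zero>\<^bsub>Q\<^esub> y \<longrightarrow> leq \<zero>\<^bsub>Q\<^esub> (x \<otimes>\<^bsub>Q\<^esub> y)) \<and>
     (\<forall>r. emb r \<in> carrier Q) \<and>
     (\<forall>r s. emb (r + s) = emb r \<oplus>\<^bsub>Q\<^esub> emb s) \<and>
     (\<forall>r s. emb (r * s) = emb r \<otimes>\<^bsub>Q\<^esub> emb s) \<and>
     emb 1 = \<one>\<^bsub>Q\<^esub> \<and>
     inj emb \<and>
     (\<forall>r s. r \<le> s \<longleftrightarrow> leq (emb r) (emb s))"

definition NAP_space ::
  "'a set \<Rightarrow> ('b, 'c) ring_scheme \<Rightarrow> ('b \<Rightarrow> 'b \<Rightarrow> bool) \<Rightarrow> (real \<Rightarrow> 'b)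
     \<Rightarrow> ('a set \<Rightarrow> 'b) \<Rightarrow> (('a set \<Rightarrow> real) \<Rightarrow> 'b) \<Rightarrow> bool" where
  "NAP_space \<Omega> Q leq emb P J \<longleftrightarrow>
     \<comment> \<open>J is an algebra homomorphism\<close>
     J \<in> ring_hom (FF \<Omega>) Q \<and>
     (\<forall>r. \<forall>\<phi>\<in>carrier (FF \<Omega>). J (scaleF r \<phi>) = emb r \<otimes>\<^bsub>Q\<^esub> J \<phi>) \<and>
     \<comment> \<open>NAP0\<close>
     superreal_field Q leq emb \<and> (\<forall>A. A \<subseteq> \<Omega> \<longrightarrow> P A \<in> carrier Q) \<and>
     \<comment> \<open>NAP1\<close>
     (\<forall>A. A \<subseteq> \<Omega> \<longrightarrow> leq \<zero>\<^bsub>Q\<^esub> (P A)) \<and>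
     \<comment> \<open>NAP2\<close>
     (\<forall>A. A \<subseteq> \<Omega> \<longrightarrow> (P A = \<one>\<^bsub>Q\<^esub> \<longleftrightarrow> A = \<Omega>)) \<and>
     \<comment> \<open>NAP3\<close>
     (\<forall>A B. A \<subseteq> \<Omega> \<longrightarrow> B \<subseteq> \<Omega> \<longrightarrow> A \<inter> B = {} \<longrightarrow> P (A \<union> B) = P A \<oplus>\<^bsub>Q\<^esub> P B) \<and>
     \<comment> \<open>NAP4: conditional probabilities w.r.t. finite sets are real, and P(A) = J(phi_A)\<close>
     (\<forall>A L. A \<subseteq> \<Omega> \<longrightarrow> L \<in> Pfin \<Omega> \<longrightarrow> L \<noteq> {} \<longrightarrow>
         (\<exists>r. emb r = P (A \<inter> L) \<otimes>\<^bsub>Q\<^esub> inv\<^bsub>Q\<^esub> (P L))) \<and>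
     (\<forall>A. A \<subseteq> \<Omega> \<longrightarrow> (\<forall>\<phi>\<in>carrier (FF \<Omega>).
         (\<forall>L\<in>Pfin \<Omega>. L \<noteq> {} \<longrightarrow> emb (\<phi> L) = P (A \<inter> L) \<otimes>\<^bsub>Q\<^esub> inv\<^bsub>Q\<^esub> (P L))
         \<longrightarrow> P A = J \<phi>))"

end

theory Submission
  imports Defs
begin

text \<open>
  The quotient \<open>R_I = F/I\<close> by a maximal ideal \<open>I\<close> of the pointwise algebra \<open>F\<close> of real
  functions on the finite subsets of \<open>\<Omega>\<close> is an ultrapower of the reals.  The sets \<open>S\<close> of
  finite subsets whose defect indicator (\<open>0\<close> on \<open>S\<close>, \<open>1\<close> elsewhere) lies in \<open>I\<close> --- the
  \<^emph>\<open>large\<close> sets --- form an ultrafilter, because \<open>I\<close> is a proper prime ideal, and a function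
  lies in \<open>I\<close> iff it vanishes on a large set.  Consequently two classes are equal, resp.
  ordered by \<open>RI_le\<close>, iff their representatives are equal, resp. ordered, on a large set;
  the ordered-field axioms of the superreal field then follow pointwise.

  For a fine ideal every set \<open>{\<lambda>. L \<subseteq> \<lambda>}\<close> with \<open>L\<close> finite is large.  With the weight \<open>w\<close>,
  \<open>P_I(A)\<close> is the class of the relative weight \<open>\<lambda> \<mapsto> w(A \<inter> \<lambda>) / w(\<lambda>)\<close>.  This gives
  NAP1--NAP3 pointwise, and NAP4 because on the large set of all \<open>\<lambda> \<supseteq> L\<close> the quotient
  \<open>P(A \<inter> L) / P(L)\<close> is represented by the real constant \<open>w(A \<inter> L) / w(L)\<close>.
\<close>

section \<open>The algebra of real functions on finite subsets\<close>

lemma carrier_FF: "f \<in> carrier (FF \<Omega>) \<longleftrightarrow> (\<forall>L. L \<notin> Pfin \<Omega> \<longrightarrow> f L = 0)"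
  by (simp add: FF_def)

lemma FF_simps:
  "x \<otimes>\<^bsub>FF \<Omega>\<^esub> y = (\<lambda>L. x L * y L)"
  "x \<oplus>\<^bsub>FF \<Omega>\<^esub> y = (\<lambda>L. x L + y L)"
  "\<one>\<^bsub>FF \<Omega>\<^esub> = onPfin \<Omega> (\<lambda>_. 1)"
  "\<zero>\<^bsub>FF \<Omega>\<^esub> = (\<lambda>L. 0)"
  by (simp_all add: FF_def onPfin_def)

lemma onPfin_carrier [simp]: "onPfin \<Omega> f \<in> carrier (FF \<Omega>)"
  by (simp add: carrier_FF onPfin_def)

lemma constF_carrier [simp]: "constF \<Omega> r \<in> carrier (FF \<Omega>)"
  by (simp add: constF_def)

lemma zero_carrier [simp]: "(\<lambda>L. 0) \<in> carrier (FF \<Omega>)"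
  by (simp add: carrier_FF)

lemma constF_add: "(\<lambda>L. constF \<Omega> r L + constF \<Omega> s L) = constF \<Omega> (r + s)"
  by (simp add: fun_eq_iff constF_def onPfin_def)

lemma constF_mult: "(\<lambda>L. constF \<Omega> r L * constF \<Omega> s L) = constF \<Omega> (r * s)"
  by (simp add: fun_eq_iff constF_def onPfin_def)

lemma cring_FF: "cring (FF \<Omega>)"
proof (rule cringI)
  show "abelian_group (FF \<Omega>)"
  proof (rule abelian_groupI)
    fix x assume "x \<in> carrier (FF \<Omega>)"
    then show "\<exists>y\<in>carrier (FF \<Omega>). y \<oplus>\<^bsub>FF \<Omega>\<^esub> x = \<zero>\<^bsub>FF \<Omega>\<^esub>"
      by (intro bexI[of _ "\<lambda>L. - x L"]) (auto simp: FF_def)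
  qed (auto simp: FF_def fun_eq_iff algebra_simps)
  show "comm_monoid (FF \<Omega>)"
    by (rule comm_monoidI) (auto simp: FF_def fun_eq_iff algebra_simps)
qed (auto simp: FF_def fun_eq_iff algebra_simps)

lemma a_coset_FF: "I +>\<^bsub>FF \<Omega>\<^esub> f = (\<Union>h\<in>I. {(\<lambda>L. h L + f L)})"
  unfolding a_r_coset_def' by (simp add: FF_simps)

lemma (in monoid) mult_Units_inv_eqI:
  assumes "z \<in> carrier G" and "y \<in> Units G" and "z \<otimes> y = x"
  shows "x \<otimes> inv y = z"
proof -
  have "x \<otimes> inv y = z \<otimes> (y \<otimes> inv y)"
    unfolding assms(3)[symmetric] using assms(1,2) by (intro m_assoc) (auto intro: Units_closed)
  then show ?thesis using assms by simp
qed

section \<open>Quotients by a maximal ideal are superreal fields\<close>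

locale maximal_ideal_FF =
  fixes \<Omega> :: "'a set" and I :: "('a set \<Rightarrow> real) set"
  assumes maximal: "maximalideal I (FF \<Omega>)"
begin

lemma ideal: "ideal I (FF \<Omega>)"
  by (rule maximalideal.axioms(1)[OF maximal])

lemma I_carrier: "f \<in> I \<Longrightarrow> f \<in> carrier (FF \<Omega>)"
  by (rule additive_subgroup.a_Hcarr[OF ideal.axioms(1)[OF ideal]])

lemma I_zero: "(\<lambda>L. 0) \<in> I"
  using additive_subgroup.zero_closed[OF ideal.axioms(1)[OF ideal]] by (simp add: FF_simps)

lemma I_add: "f \<in> I \<Longrightarrow> g \<in> I \<Longrightarrow> (\<lambda>L. f L + g L) \<in> I"
  using additive_subgroup.a_closed[OF ideal.axioms(1)[OF ideal]] by (simp add: FF_simps)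

lemma I_mult: "f \<in> I \<Longrightarrow> g \<in> carrier (FF \<Omega>) \<Longrightarrow> (\<lambda>L. g L * f L) \<in> I"
  using ideal.I_l_closed[OF ideal] by (simp add: FF_simps)

lemma one_notin_I: "onPfin \<Omega> (\<lambda>_. 1) \<notin> I"
proof
  assume "onPfin \<Omega> (\<lambda>_. 1) \<in> I"
  then have "I = carrier (FF \<Omega>)"
    using ideal.one_imp_carrier[OF ideal] by (simp add: FF_simps)
  then show False using maximalideal.I_notcarr[OF maximal] by simp
qed

subsection \<open>Large sets\<close>

definition defect :: "'a set set \<Rightarrow> 'a set \<Rightarrow> real" where
  "defect S = onPfin \<Omega> (\<lambda>L. if L \<in> S then 0 else 1)"

definition large :: "'a set set \<Rightarrow> bool" where
  "large S \<longleftrightarrow> defect S \<in> I"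

lemma defect_carrier [simp]: "defect S \<in> carrier (FF \<Omega>)"
  by (simp add: defect_def)

lemma large_UNIV: "large UNIV"
  using I_zero by (simp add: large_def defect_def onPfin_def)

lemma large_mono:
  assumes "large S" and "S \<inter> Pfin \<Omega> \<subseteq> T"
  shows "large T"
proof -
  have "(\<lambda>L. defect T L * defect S L) \<in> I"
    using assms(1) unfolding large_def by (rule I_mult) simp
  moreover have "(\<lambda>L. defect T L * defect S L) = defect T"
    using assms(2) by (auto simp: fun_eq_iff defect_def onPfin_def)
  ultimately show ?thesis by (simp add: large_def)
qed

lemma large_Int:
  assumes "large S" and "large T"
  shows "large (S \<inter> T)"
proof -
  have "(\<lambda>L. defect (- S) L * defect T L) \<in> I"
    using assms(2) unfolding large_def by (rule I_mult) simp
  with assms(1) have "(\<lambda>L. defect S L + defect (- S) L * defect T L) \<in> I"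
    unfolding large_def by (rule I_add)
  moreover have "(\<lambda>L. defect S L + defect (- S) L * defect T L) = defect (S \<inter> T)"
    by (auto simp: fun_eq_iff defect_def onPfin_def)
  ultimately show ?thesis by (simp add: large_def)
qed

text \<open>Large sets are nonempty on \<open>Pfin \<Omega>\<close>, because \<open>I\<close> is proper.\<close>

lemma large_obtain:
  assumes "large S"
  obtains L where "L \<in> Pfin \<Omega>" and "L \<in> S"
proof (rule ccontr)
  assume "\<not> thesis"
  with that have "defect S = onPfin \<Omega> (\<lambda>_. 1)"
    by (auto simp: fun_eq_iff defect_def onPfin_def)
  with assms show False using one_notin_I by (simp add: large_def)
qed

text \<open>Ultrafilter property: since \<open>I\<close> is prime, of a set and its complement one is large.\<close>

lemma large_or_compl: "large S \<or> large (- S)"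
proof -
  have "defect S \<otimes>\<^bsub>FF \<Omega>\<^esub> defect (- S) = (\<lambda>L. 0)"
    by (auto simp: FF_simps defect_def onPfin_def fun_eq_iff)
  then have "defect S \<otimes>\<^bsub>FF \<Omega>\<^esub> defect (- S) \<in> I" using I_zero by simp
  then show ?thesis
    using primeideal.I_prime[OF cring.maximalideal_prime[OF cring_FF maximal]]
    by (auto simp: large_def)
qed

lemma large_const: "large {L. L \<in> Pfin \<Omega> \<longrightarrow> P} \<longleftrightarrow> P"
proof
  assume "large {L. L \<in> Pfin \<Omega> \<longrightarrow> P}"
  then show P by (rule large_obtain) simp
next
  assume P
  then show "large {L. L \<in> Pfin \<Omega> \<longrightarrow> P}" using large_UNIV by simp
qed

text \<open>For the hard
  direction, if \<open>f \<in> I\<close> did not vanish on a large set, \<open>f\<^sup>2\<close> plus the defect indicator of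
  its nonzero set would be an invertible element of \<open>I\<close>.\<close>

lemma mem_I_iff_large:
  assumes f: "f \<in> carrier (FF \<Omega>)"
  shows "f \<in> I \<longleftrightarrow> large {L. f L = 0}"
proof
  assume "large {L. f L = 0}"
  then have "(\<lambda>L. f L * defect {L. f L = 0} L) \<in> I"
    unfolding large_def using f by (rule I_mult)
  moreover have "(\<lambda>L. f L * defect {L. f L = 0} L) = f"
    using f by (auto simp: fun_eq_iff defect_def onPfin_def carrier_FF)
  ultimately show "f \<in> I" by simp
next
  assume fI: "f \<in> I"
  show "large {L. f L = 0}"
  proof (rule ccontr)
    assume "\<not> large {L. f L = 0}"
    then have nonzero_large: "defect (- {L. f L = 0}) \<in> I" using large_or_compl large_def by blast
    define h where "h = (\<lambda>L. f L * f L + defect (- {L. f L = 0}) L)"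
    have hI: "h \<in> I"
      unfolding h_def using nonzero_large by (rule I_add[OF I_mult[OF fI f]])
    have h_pos: "h L > 0" if "L \<in> Pfin \<Omega>" for L
      using that by (cases "f L = 0") (auto simp: h_def defect_def onPfin_def zero_less_mult_iff)
    have "(\<lambda>L. onPfin \<Omega> (\<lambda>L. 1 / h L) L * h L) \<in> I" by (rule I_mult[OF hI]) simp
    moreover have "(\<lambda>L. onPfin \<Omega> (\<lambda>L. 1 / h L) L * h L) = onPfin \<Omega> (\<lambda>_. 1)"
      using h_pos by (force simp: fun_eq_iff onPfin_def)
    ultimately show False using one_notin_I by simp
  qed
qed

lemma mem_JI_iff:
  assumes f: "f \<in> carrier (FF \<Omega>)"
  shows "\<phi> \<in> JI \<Omega> I f \<longleftrightarrow> \<phi> \<in> carrier (FF \<Omega>) \<and> (\<lambda>L. \<phi> L - f L) \<in> I"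
proof
  assume "\<phi> \<in> JI \<Omega> I f"
  then obtain h where h: "h \<in> I" "\<phi> = (\<lambda>L. h L + f L)" by (auto simp: JI_def a_coset_FF)
  then show "\<phi> \<in> carrier (FF \<Omega>) \<and> (\<lambda>L. \<phi> L - f L) \<in> I"
    using I_carrier[OF h(1)] f by (auto simp: carrier_FF)
next
  assume "\<phi> \<in> carrier (FF \<Omega>) \<and> (\<lambda>L. \<phi> L - f L) \<in> I"
  moreover have "\<phi> = (\<lambda>L. (\<phi> L - f L) + f L)" by simp
  ultimately show "\<phi> \<in> JI \<Omega> I f" unfolding JI_def a_coset_FF by blast
qed

lemma mem_JI_iff_large:
  assumes f: "f \<in> carrier (FF \<Omega>)"
  shows "\<phi> \<in> JI \<Omega> I f \<longleftrightarrow> \<phi> \<in> carrier (FF \<Omega>) \<and> large {L. \<phi> L = f L}"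
  using mem_JI_iff[OF f] mem_I_iff_large[of "\<lambda>L. \<phi> L - f L"] f by (auto simp: carrier_FF)

lemma JI_self: "f \<in> carrier (FF \<Omega>) \<Longrightarrow> f \<in> JI \<Omega> I f"
  using mem_JI_iff I_zero by simp

lemma JI_eq_iff_large:
  assumes f: "f \<in> carrier (FF \<Omega>)" and g: "g \<in> carrier (FF \<Omega>)"
  shows "JI \<Omega> I f = JI \<Omega> I g \<longleftrightarrow> large {L. f L = g L}"
proof -
  have "JI \<Omega> I f = JI \<Omega> I g \<longleftrightarrow> f \<in> JI \<Omega> I g"
  proof
    assume "f \<in> JI \<Omega> I g"
    interpret ideal I "FF \<Omega>" by (rule ideal)
    show "JI \<Omega> I f = JI \<Omega> I g" using a_repr_independence' \<open>f \<in> JI \<Omega> I g\<close> g by (simp add: JI_def)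
  qed (use JI_self[OF f] in simp)
  also have "\<dots> \<longleftrightarrow> large {L. f L = g L}" using mem_JI_iff_large[OF g] f by simp
  finally show ?thesis .
qed

lemma RI_le_iff_large:
  assumes f: "f \<in> carrier (FF \<Omega>)" and g: "g \<in> carrier (FF \<Omega>)"
  shows "RI_le (JI \<Omega> I f) (JI \<Omega> I g) \<longleftrightarrow> large {L. f L \<le> g L}"
proof
  assume "RI_le (JI \<Omega> I f) (JI \<Omega> I g)"
  then obtain \<phi> \<psi> where reps: "\<phi> \<in> JI \<Omega> I f" "\<psi> \<in> JI \<Omega> I g" and le: "\<forall>L. \<phi> L \<le> \<psi> L"
    unfolding RI_le_def by blast
  have "large {L. \<phi> L = f L}" "large {L. \<psi> L = g L}"
    using reps mem_JI_iff_large f g by auto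
  then have "large ({L. \<phi> L = f L} \<inter> {L. \<psi> L = g L})" by (rule large_Int)
  then show "large {L. f L \<le> g L}" by (rule large_mono) (clarsimp, metis le)
next
  assume le: "large {L. f L \<le> g L}"
  define \<phi> where "\<phi> = (\<lambda>L. min (f L) (g L))"
  have \<phi>: "\<phi> \<in> carrier (FF \<Omega>)" using f g by (simp add: carrier_FF \<phi>_def)
  have "large {L. \<phi> L = f L}" by (rule large_mono[OF le]) (auto simp: \<phi>_def)
  then have "\<phi> \<in> JI \<Omega> I f" using mem_JI_iff_large[OF f] \<phi> by simp
  moreover have "g \<in> JI \<Omega> I g" using JI_self[OF g] .
  ultimately show "RI_le (JI \<Omega> I f) (JI \<Omega> I g)"
    unfolding RI_le_def by (intro bexI[of _ \<phi>] bexI[of _ g]) (auto simp: \<phi>_def)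
qed

lemma field_RI: "field (RI \<Omega> I)"
  unfolding RI_def by (rule maximalideal.quotient_is_field[OF maximal cring_FF])

lemma JI_ring_hom: "JI \<Omega> I \<in> ring_hom (FF \<Omega>) (RI \<Omega> I)"
proof -
  have "JI \<Omega> I = a_r_coset (FF \<Omega>) I" by (simp add: fun_eq_iff JI_def)
  then show ?thesis using ideal.rcos_ring_hom[OF ideal] by (simp add: RI_def)
qed

lemma carrier_RI: "carrier (RI \<Omega> I) = JI \<Omega> I ` carrier (FF \<Omega>)"
  unfolding RI_def FactRing_def A_RCOSETS_def' JI_def by auto

lemma ball_RI: "(\<forall>x\<in>carrier (RI \<Omega> I). P x) \<longleftrightarrow> (\<forall>f\<in>carrier (FF \<Omega>). P (JI \<Omega> I f))"
  by (simp add: carrier_RI)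

lemma JI_carrier [simp]: "f \<in> carrier (FF \<Omega>) \<Longrightarrow> JI \<Omega> I f \<in> carrier (RI \<Omega> I)"
  by (simp add: carrier_RI)

lemma JI_add:
  "f \<in> carrier (FF \<Omega>) \<Longrightarrow> g \<in> carrier (FF \<Omega>) \<Longrightarrow>
     JI \<Omega> I f \<oplus>\<^bsub>RI \<Omega> I\<^esub> JI \<Omega> I g = JI \<Omega> I (\<lambda>L. f L + g L)"
  using ring_hom_add[OF JI_ring_hom] by (simp add: FF_simps)

lemma JI_mult:
  "f \<in> carrier (FF \<Omega>) \<Longrightarrow> g \<in> carrier (FF \<Omega>) \<Longrightarrow>
     JI \<Omega> I f \<otimes>\<^bsub>RI \<Omega> I\<^esub> JI \<Omega> I g = JI \<Omega> I (\<lambda>L. f L * g L)"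
  using ring_hom_mult[OF JI_ring_hom] by (simp add: FF_simps)

lemma zero_RI: "\<zero>\<^bsub>RI \<Omega> I\<^esub> = JI \<Omega> I (\<lambda>L. 0)"
proof -
  interpret RI: field "RI \<Omega> I" by (rule field_RI)
  show ?thesis
    using ring_hom_zero[OF JI_ring_hom cring.axioms(1)[OF cring_FF] RI.ring_axioms]
    by (simp add: FF_simps)
qed

lemma one_RI: "\<one>\<^bsub>RI \<Omega> I\<^esub> = JI \<Omega> I (onPfin \<Omega> (\<lambda>_. 1))"
  using ring_hom_one[OF JI_ring_hom] by (simp add: FF_simps)

lemma RI_le_refl: "f \<in> carrier (FF \<Omega>) \<Longrightarrow> RI_le (JI \<Omega> I f) (JI \<Omega> I f)"
  using RI_le_iff_large large_UNIV by simp

lemma RI_le_antisym: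
  assumes "f \<in> carrier (FF \<Omega>)" "g \<in> carrier (FF \<Omega>)"
    and "RI_le (JI \<Omega> I f) (JI \<Omega> I g)" "RI_le (JI \<Omega> I g) (JI \<Omega> I f)"
  shows "JI \<Omega> I f = JI \<Omega> I g"
proof -
  have "large ({L. f L \<le> g L} \<inter> {L. g L \<le> f L})"
    using assms by (simp add: RI_le_iff_large large_Int)
  then have "large {L. f L = g L}" by (rule large_mono) auto
  then show ?thesis using assms(1,2) by (simp add: JI_eq_iff_large)
qed

lemma RI_le_trans:
  assumes "f \<in> carrier (FF \<Omega>)" "g \<in> carrier (FF \<Omega>)" "h \<in> carrier (FF \<Omega>)"
    and "RI_le (JI \<Omega> I f) (JI \<Omega> I g)" "RI_le (JI \<Omega> I g) (JI \<Omega> I h)"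
  shows "RI_le (JI \<Omega> I f) (JI \<Omega> I h)"
proof -
  have "large ({L. f L \<le> g L} \<inter> {L. g L \<le> h L})"
    using assms by (simp add: RI_le_iff_large large_Int)
  then have "large {L. f L \<le> h L}" by (rule large_mono) auto
  then show ?thesis using assms(1,3) by (simp add: RI_le_iff_large)
qed

text \<open>Totality is where the ultrafilter property enters.\<close>

lemma RI_le_total:
  assumes "f \<in> carrier (FF \<Omega>)" "g \<in> carrier (FF \<Omega>)"
  shows "RI_le (JI \<Omega> I f) (JI \<Omega> I g) \<or> RI_le (JI \<Omega> I g) (JI \<Omega> I f)"
proof -
  have "large (- {L. f L \<le> g L}) \<Longrightarrow> large {L. g L \<le> f L}" by (erule large_mono) auto
  then show ?thesis using large_or_compl[of "{L. f L \<le> g L}"] assms by (auto simp: RI_le_iff_large)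
qed

lemma RI_le_add_right:
  assumes "f \<in> carrier (FF \<Omega>)" "g \<in> carrier (FF \<Omega>)" "h \<in> carrier (FF \<Omega>)"
    and "RI_le (JI \<Omega> I f) (JI \<Omega> I g)"
  shows "RI_le (JI \<Omega> I f \<oplus>\<^bsub>RI \<Omega> I\<^esub> JI \<Omega> I h) (JI \<Omega> I g \<oplus>\<^bsub>RI \<Omega> I\<^esub> JI \<Omega> I h)"
proof -
  have "large {L. f L + h L \<le> g L + h L}"
    using assms by (simp add: RI_le_iff_large)
  then show ?thesis using assms(1-3) by (simp add: JI_add RI_le_iff_large carrier_FF)
qed

lemma RI_mult_nonneg:
  assumes "f \<in> carrier (FF \<Omega>)" "g \<in> carrier (FF \<Omega>)"
    and "RI_le \<zero>\<^bsub>RI \<Omega> I\<^esub> (JI \<Omega> I f)" "RI_le \<zero>\<^bsub>RI \<Omega> I\<^esub> (JI \<Omega> I g)"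
  shows "RI_le \<zero>\<^bsub>RI \<Omega> I\<^esub> (JI \<Omega> I f \<otimes>\<^bsub>RI \<Omega> I\<^esub> JI \<Omega> I g)"
proof -
  have "large ({L. 0 \<le> f L} \<inter> {L. 0 \<le> g L})"
    using assms by (simp add: zero_RI RI_le_iff_large large_Int)
  then have "large {L. 0 \<le> f L * g L}" by (rule large_mono) auto
  then show ?thesis using assms(1,2) by (simp add: zero_RI JI_mult RI_le_iff_large carrier_FF)
qed

lemma embI_eq: "embI \<Omega> I r = JI \<Omega> I (constF \<Omega> r)"
  by (simp add: embI_def)

lemma embI_carrier: "embI \<Omega> I r \<in> carrier (RI \<Omega> I)"
  by (simp add: embI_eq)

lemma embI_add: "embI \<Omega> I (r + s) = embI \<Omega> I r \<oplus>\<^bsub>RI \<Omega> I\<^esub> embI \<Omega> I s"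
  by (simp add: embI_eq JI_add constF_add)

lemma embI_mult: "embI \<Omega> I (r * s) = embI \<Omega> I r \<otimes>\<^bsub>RI \<Omega> I\<^esub> embI \<Omega> I s"
  by (simp add: embI_eq JI_mult constF_mult)

lemma embI_le_iff: "r \<le> s \<longleftrightarrow> RI_le (embI \<Omega> I r) (embI \<Omega> I s)"
proof -
  have "{L. constF \<Omega> r L \<le> constF \<Omega> s L} = {L. L \<in> Pfin \<Omega> \<longrightarrow> r \<le> s}"
    by (auto simp: constF_def onPfin_def)
  then show ?thesis by (simp add: embI_eq RI_le_iff_large large_const)
qed

text \<open>The embedding reflects the order, hence it is injective.\<close>

lemma embI_inj: "inj (embI \<Omega> I)"
proof (rule injI)
  fix r s assume "embI \<Omega> I r = embI \<Omega> I s"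
  then show "r = s" by (metis embI_le_iff order_antisym order_refl)
qed

lemma JI_scaleF:
  assumes "\<phi> \<in> carrier (FF \<Omega>)"
  shows "JI \<Omega> I (scaleF r \<phi>) = embI \<Omega> I r \<otimes>\<^bsub>RI \<Omega> I\<^esub> JI \<Omega> I \<phi>"
proof -
  have "scaleF r \<phi> = (\<lambda>L. constF \<Omega> r L * \<phi> L)"
    using assms by (auto simp: fun_eq_iff scaleF_def constF_def onPfin_def carrier_FF)
  then show ?thesis using assms by (simp add: embI_eq JI_mult)
qed

theorem superreal_RI: "superreal_field (RI \<Omega> I) RI_le (embI \<Omega> I)"
  unfolding superreal_field_def
proof (intro conjI)
  show "\<forall>x\<in>carrier (RI \<Omega> I). RI_le x x"
    unfolding ball_RI using RI_le_refl by blast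
  show "\<forall>x\<in>carrier (RI \<Omega> I). \<forall>y\<in>carrier (RI \<Omega> I). RI_le x y \<and> RI_le y x \<longrightarrow> x = y"
    unfolding ball_RI using RI_le_antisym by blast
  show "\<forall>x\<in>carrier (RI \<Omega> I). \<forall>y\<in>carrier (RI \<Omega> I). \<forall>z\<in>carrier (RI \<Omega> I).
      RI_le x y \<and> RI_le y z \<longrightarrow> RI_le x z"
    unfolding ball_RI using RI_le_trans by blast
  show "\<forall>x\<in>carrier (RI \<Omega> I). \<forall>y\<in>carrier (RI \<Omega> I). RI_le x y \<or> RI_le y x"
    unfolding ball_RI using RI_le_total by blast
  show "\<forall>x\<in>carrier (RI \<Omega> I). \<forall>y\<in>carrier (RI \<Omega> I). \<forall>z\<in>carrier (RI \<Omega> I).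
      RI_le x y \<longrightarrow> RI_le (x \<oplus>\<^bsub>RI \<Omega> I\<^esub> z) (y \<oplus>\<^bsub>RI \<Omega> I\<^esub> z)"
    unfolding ball_RI using RI_le_add_right by blast
  show "\<forall>x\<in>carrier (RI \<Omega> I). \<forall>y\<in>carrier (RI \<Omega> I).
      RI_le \<zero>\<^bsub>RI \<Omega> I\<^esub> x \<and> RI_le \<zero>\<^bsub>RI \<Omega> I\<^esub> y \<longrightarrow> RI_le \<zero>\<^bsub>RI \<Omega> I\<^esub> (x \<otimes>\<^bsub>RI \<Omega> I\<^esub> y)"
    unfolding ball_RI using RI_mult_nonneg by blast
  show "embI \<Omega> I 1 = \<one>\<^bsub>RI \<Omega> I\<^esub>"
    by (simp add: embI_eq one_RI constF_def)
qed (simp_all add: field_RI embI_carrier embI_add embI_mult embI_inj embI_le_iff)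

end

section \<open>The NAP axioms for a fine ideal and a positive weight\<close>

locale fine_weighted = maximal_ideal_FF +
  fixes w :: "'a \<Rightarrow> real"
  assumes fine: "\<forall>\<omega>\<in>\<Omega>. onPfin \<Omega> (\<lambda>L. 1 - chi L \<omega>) \<in> I"
    and nonempty: "\<Omega> \<noteq> {}"
    and w_pos: "\<forall>\<omega>\<in>\<Omega>. w \<omega> > 0"
begin

lemma large_member: "\<omega> \<in> \<Omega> \<Longrightarrow> large {L. \<omega> \<in> L}"
proof -
  assume "\<omega> \<in> \<Omega>"
  then have "onPfin \<Omega> (\<lambda>L. 1 - chi L \<omega>) \<in> I" using fine by blast
  moreover have "onPfin \<Omega> (\<lambda>L. 1 - chi L \<omega>) = defect {L. \<omega> \<in> L}"
    by (auto simp: fun_eq_iff defect_def onPfin_def chi_def)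
  ultimately show ?thesis by (simp add: large_def)
qed

lemma large_superset: "finite L\<^sub>0 \<Longrightarrow> L\<^sub>0 \<subseteq> \<Omega> \<Longrightarrow> large {L. L\<^sub>0 \<subseteq> L}"
proof (induction L\<^sub>0 rule: finite_induct)
  case empty
  then show ?case using large_UNIV by simp
next
  case (insert x F)
  then have "large ({L. x \<in> L} \<inter> {L. F \<subseteq> L})" using large_member by (intro large_Int) auto
  then show ?case by (rule large_mono) auto
qed

lemma large_nonempty_sets: "large {L. L \<noteq> {}}"
proof -
  obtain \<omega> where "\<omega> \<in> \<Omega>" using nonempty by blast
  then have "large {L. \<omega> \<in> L}" by (rule large_member)
  then show ?thesis by (rule large_mono) auto
qed

definition wsum :: "'a set \<Rightarrow> real" where
  "wsum S = (\<Sum>\<omega>\<in>S. w \<omega>)"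

text \<open>The relative weight of \<open>A\<close> in the finite set \<open>L\<close>; it represents \<open>P_I(A)\<close>.\<close>

definition relw :: "'a set \<Rightarrow> 'a set \<Rightarrow> real" where
  "relw A L = wsum (A \<inter> L) / wsum L"

lemma wsum_nonneg: "S \<subseteq> \<Omega> \<Longrightarrow> 0 \<le> wsum S"
  using w_pos unfolding wsum_def by (intro sum_nonneg) (auto intro: less_imp_le)

lemma wsum_pos: "L \<in> Pfin \<Omega> \<Longrightarrow> L \<noteq> {} \<Longrightarrow> 0 < wsum L"
  using w_pos unfolding wsum_def by (intro sum_pos) (auto simp: Pfin_def)

lemma relw_nonneg: "L \<in> Pfin \<Omega> \<Longrightarrow> 0 \<le> relw A L"
  unfolding relw_def by (auto simp: Pfin_def intro!: divide_nonneg_nonneg wsum_nonneg)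

lemma relw_Omega: "L \<in> Pfin \<Omega> \<Longrightarrow> L \<noteq> {} \<Longrightarrow> relw \<Omega> L = 1"
  using wsum_pos[of L] by (auto simp: relw_def Pfin_def Int_absorb1)

lemma relw_less_one:
  assumes L: "L \<in> Pfin \<Omega>" and "\<omega> \<in> L" "\<omega> \<notin> A"
  shows "relw A L < 1"
proof -
  have fin: "finite L" "L \<subseteq> \<Omega>" using L by (auto simp: Pfin_def)
  have "wsum L = wsum (A \<inter> L) + wsum (L - A)"
    unfolding wsum_def using sum.Int_Diff[OF fin(1), of w A] by (simp add: Int_commute)
  moreover have "0 < wsum (L - A)"
    unfolding wsum_def using fin assms(2,3) w_pos by (intro sum_pos) auto
  ultimately have "wsum (A \<inter> L) < wsum L" by simp
  moreover have "0 < wsum L" using wsum_pos[OF L] assms(2) by blast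
  ultimately show ?thesis by (simp add: relw_def divide_less_eq_1_pos)
qed

lemma relw_Un:
  assumes "finite L" and "A \<inter> B = {}"
  shows "relw (A \<union> B) L = relw A L + relw B L"
proof -
  have "wsum ((A \<union> B) \<inter> L) = wsum (A \<inter> L) + wsum (B \<inter> L)"
    unfolding wsum_def Int_Un_distrib2 using assms by (intro sum.union_disjoint) auto
  then show ?thesis by (simp add: relw_def add_divide_distrib)
qed

lemma relw_chain:
  assumes "L \<subseteq> M" "M \<in> Pfin \<Omega>" "L \<noteq> {}"
  shows "relw (A \<inter> L) M = relw A L * relw L M"
proof -
  have "L \<in> Pfin \<Omega>" using assms by (auto simp: Pfin_def finite_subset)
  then have "wsum L \<noteq> 0" using wsum_pos assms(3) by force
  moreover have "A \<inter> L \<inter> M = A \<inter> L" "L \<inter> M = L" using assms(1) by auto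
  ultimately show ?thesis by (simp add: relw_def)
qed

lemma relw_pos:
  assumes "L \<subseteq> M" "M \<in> Pfin \<Omega>" "L \<noteq> {}"
  shows "0 < relw L M"
proof -
  have "L \<in> Pfin \<Omega>" "M \<noteq> {}" using assms by (auto simp: Pfin_def finite_subset)
  then show ?thesis using wsum_pos assms by (simp add: relw_def Int_absorb2)
qed

text \<open>\<open>P_I(A)\<close> is the class of the relative weight of \<open>A\<close>; the denominator is inverted
  pointwise, which is legitimate because almost every finite set is nonempty.\<close>

lemma PI_eq: "PI \<Omega> I w A = JI \<Omega> I (onPfin \<Omega> (relw A))"
proof -
  interpret RI: field "RI \<Omega> I" by (rule field_RI)
  have sum: "sumI \<Omega> I S w = JI \<Omega> I (onPfin \<Omega> (\<lambda>L. wsum (S \<inter> L)))" for S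
    by (simp add: sumI_def wsum_def JI_def)
  have "onPfin \<Omega> (\<lambda>L. wsum (\<Omega> \<inter> L)) L * onPfin \<Omega> (\<lambda>L. 1 / wsum L) L = onPfin \<Omega> (\<lambda>_. 1) L"
    if "L \<noteq> {}" for L
  proof (cases "L \<in> Pfin \<Omega>")
    case True
    then have "\<Omega> \<inter> L = L" "wsum L \<noteq> 0" using wsum_pos[OF True that] by (auto simp: Pfin_def)
    then show ?thesis using True by (simp add: onPfin_def)
  qed (simp add: onPfin_def)
  then have "large {L. onPfin \<Omega> (\<lambda>L. wsum (\<Omega> \<inter> L)) L * onPfin \<Omega> (\<lambda>L. 1 / wsum L) L
      = onPfin \<Omega> (\<lambda>_. 1) L}"
    by (intro large_mono[OF large_nonempty_sets]) auto
  then have "sumI \<Omega> I \<Omega> w \<otimes>\<^bsub>RI \<Omega> I\<^esub> JI \<Omega> I (onPfin \<Omega> (\<lambda>L. 1 / wsum L)) = \<one>\<^bsub>RI \<Omega> I\<^esub>"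
    by (simp add: sum JI_mult one_RI JI_eq_iff_large carrier_FF onPfin_def)
  then have inv: "inv\<^bsub>RI \<Omega> I\<^esub> (sumI \<Omega> I \<Omega> w) = JI \<Omega> I (onPfin \<Omega> (\<lambda>L. 1 / wsum L))"
    by (intro RI.comm_inv_char) (simp_all add: sum)
  have "(\<lambda>L. onPfin \<Omega> (\<lambda>L. wsum (A \<inter> L)) L * onPfin \<Omega> (\<lambda>L. 1 / wsum L) L) = onPfin \<Omega> (relw A)"
    by (simp add: fun_eq_iff onPfin_def relw_def)
  then show ?thesis unfolding PI_def inv by (simp add: sum JI_mult)
qed

lemma PI_carrier: "PI \<Omega> I w A \<in> carrier (RI \<Omega> I)"
  by (simp add: PI_eq)

lemma PI_nonneg: "RI_le \<zero>\<^bsub>RI \<Omega> I\<^esub> (PI \<Omega> I w A)"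
proof -
  have "{L. 0 \<le> onPfin \<Omega> (relw A) L} = UNIV"
    using relw_nonneg by (auto simp: onPfin_def)
  then show ?thesis using large_UNIV by (simp add: PI_eq zero_RI RI_le_iff_large)
qed

lemma PI_eq_one_iff:
  assumes "A \<subseteq> \<Omega>"
  shows "PI \<Omega> I w A = \<one>\<^bsub>RI \<Omega> I\<^esub> \<longleftrightarrow> A = \<Omega>"
proof -
  have one: "PI \<Omega> I w A = \<one>\<^bsub>RI \<Omega> I\<^esub> \<longleftrightarrow> large {L. onPfin \<Omega> (relw A) L = onPfin \<Omega> (\<lambda>_. 1) L}"
    by (simp add: PI_eq one_RI JI_eq_iff_large)
  show ?thesis
  proof
    assume "PI \<Omega> I w A = \<one>\<^bsub>RI \<Omega> I\<^esub>"
    show "A = \<Omega>"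
    proof (rule ccontr)
      assume "A \<noteq> \<Omega>"
      then obtain \<omega> where \<omega>: "\<omega> \<in> \<Omega>" "\<omega> \<notin> A" using assms by blast
      have "large ({L. \<omega> \<in> L} \<inter> {L. onPfin \<Omega> (relw A) L = onPfin \<Omega> (\<lambda>_. 1) L})"
        using large_member[OF \<omega>(1)] \<open>PI \<Omega> I w A = \<one>\<^bsub>RI \<Omega> I\<^esub>\<close> one by (simp add: large_Int)
      then obtain L where "L \<in> Pfin \<Omega>" "\<omega> \<in> L" "relw A L = 1"
        by (rule large_obtain) (auto simp: onPfin_def)
      then show False using relw_less_one \<omega>(2) by force
    qed
  next
    assume "A = \<Omega>"
    have "large {L. onPfin \<Omega> (relw A) L = onPfin \<Omega> (\<lambda>_. 1) L}"
      by (rule large_mono[OF large_nonempty_sets]) (auto simp: onPfin_def \<open>A = \<Omega>\<close> intro!: relw_Omega)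
    then show "PI \<Omega> I w A = \<one>\<^bsub>RI \<Omega> I\<^esub>" using one by simp
  qed
qed

lemma PI_Un: "A \<inter> B = {} \<Longrightarrow> PI \<Omega> I w (A \<union> B) = PI \<Omega> I w A \<oplus>\<^bsub>RI \<Omega> I\<^esub> PI \<Omega> I w B"
proof -
  assume "A \<inter> B = {}"
  then have "onPfin \<Omega> (relw (A \<union> B)) = (\<lambda>L. onPfin \<Omega> (relw A) L + onPfin \<Omega> (relw B) L)"
    by (auto simp: fun_eq_iff onPfin_def Pfin_def relw_Un)
  then show ?thesis by (simp add: PI_eq JI_add)
qed

lemma PI_finite_nonzero:
  assumes L: "L \<in> Pfin \<Omega>" "L \<noteq> {}"
  shows "PI \<Omega> I w L \<noteq> \<zero>\<^bsub>RI \<Omega> I\<^esub>"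
proof
  assume "PI \<Omega> I w L = \<zero>\<^bsub>RI \<Omega> I\<^esub>"
  then have "large {M. onPfin \<Omega> (relw L) M = 0}"
    by (simp add: PI_eq zero_RI JI_eq_iff_large)
  then have "large ({M. L \<subseteq> M} \<inter> {M. onPfin \<Omega> (relw L) M = 0})"
    using large_superset L by (intro large_Int) (auto simp: Pfin_def)
  then obtain M where "M \<in> Pfin \<Omega>" "L \<subseteq> M" "relw L M = 0"
    by (rule large_obtain) (auto simp: onPfin_def)
  then show False using relw_pos[of L M] L(2) by simp
qed

text \<open>NAP4, first half: conditioning on a nonempty finite \<open>L\<close> yields a real number, namely
  the relative weight; on the large set of supersets of \<open>L\<close> this is the chain rule.\<close>

lemma PI_conditional:
  assumes L: "L \<in> Pfin \<Omega>" "L \<noteq> {}"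
  shows "PI \<Omega> I w (A \<inter> L) \<otimes>\<^bsub>RI \<Omega> I\<^esub> inv\<^bsub>RI \<Omega> I\<^esub> (PI \<Omega> I w L) = embI \<Omega> I (relw A L)"
proof -
  interpret RI: field "RI \<Omega> I" by (rule field_RI)
  have fin: "finite L" "L \<subseteq> \<Omega>" using L(1) by (auto simp: Pfin_def)
  have "large {M. constF \<Omega> (relw A L) M * onPfin \<Omega> (relw L) M = onPfin \<Omega> (relw (A \<inter> L)) M}"
    by (rule large_mono[OF large_superset[OF fin]]) (auto simp: constF_def onPfin_def relw_chain L(2))
  then have "embI \<Omega> I (relw A L) \<otimes>\<^bsub>RI \<Omega> I\<^esub> PI \<Omega> I w L = PI \<Omega> I w (A \<inter> L)"
    by (simp add: embI_eq PI_eq JI_mult JI_eq_iff_large carrier_FF constF_def onPfin_def)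
  moreover have "PI \<Omega> I w L \<in> Units (RI \<Omega> I)"
    using PI_carrier PI_finite_nonzero[OF L] by (simp add: RI.field_Units)
  ultimately show ?thesis by (intro RI.mult_Units_inv_eqI) (simp_all add: embI_carrier)
qed

lemma PI_eq_JI_conditional:
  assumes \<phi>: "\<phi> \<in> carrier (FF \<Omega>)"
    and cond: "\<forall>L\<in>Pfin \<Omega>. L \<noteq> {} \<longrightarrow>
      embI \<Omega> I (\<phi> L) = PI \<Omega> I w (A \<inter> L) \<otimes>\<^bsub>RI \<Omega> I\<^esub> inv\<^bsub>RI \<Omega> I\<^esub> (PI \<Omega> I w L)"
  shows "PI \<Omega> I w A = JI \<Omega> I \<phi>"
proof -
  have agree: "\<phi> L = relw A L" if "L \<in> Pfin \<Omega>" "L \<noteq> {}" for L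
  proof -
    have "embI \<Omega> I (\<phi> L) = embI \<Omega> I (relw A L)"
      using cond that PI_conditional[OF that] by simp
    then show ?thesis by (rule injD[OF embI_inj])
  qed
  have "large {L. onPfin \<Omega> (relw A) L = \<phi> L}"
    by (intro large_mono[OF large_nonempty_sets]) (auto simp: onPfin_def intro!: agree[symmetric])
  then show ?thesis using \<phi> by (simp add: PI_eq JI_eq_iff_large)
qed

theorem NAP_RI: "NAP_space \<Omega> (RI \<Omega> I) RI_le (embI \<Omega> I) (PI \<Omega> I w) (JI \<Omega> I)"
  unfolding NAP_space_def
proof (intro conjI allI impI ballI)
  fix A L assume "L \<in> Pfin \<Omega>" "L \<noteq> {}"
  then show "\<exists>r. embI \<Omega> I r = PI \<Omega> I w (A \<inter> L) \<otimes>\<^bsub>RI \<Omega> I\<^esub> inv\<^bsub>RI \<Omega> I\<^esub> (PI \<Omega> I w L)"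
    using PI_conditional by metis
next
  fix A \<phi> assume "\<phi> \<in> carrier (FF \<Omega>)" and "\<forall>L\<in>Pfin \<Omega>. L \<noteq> {} \<longrightarrow>
      embI \<Omega> I (\<phi> L) = PI \<Omega> I w (A \<inter> L) \<otimes>\<^bsub>RI \<Omega> I\<^esub> inv\<^bsub>RI \<Omega> I\<^esub> (PI \<Omega> I w L)"
  then show "PI \<Omega> I w A = JI \<Omega> I \<phi>" by (rule PI_eq_JI_conditional)
qed (use JI_ring_hom JI_scaleF superreal_RI PI_carrier PI_nonneg PI_eq_one_iff PI_Un in blast)+

end

theorem mainTheorem8:
  fixes \<Omega> :: "'a set" and w :: "'a \<Rightarrow> real" and I :: "('a set \<Rightarrow> real) set"
  assumes "infinite \<Omega>"
    and "\<forall>\<omega>\<in>\<Omega>. w \<omega> > 0"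
    and "fine_ideal \<Omega> I"
  shows "superreal_field (RI \<Omega> I) RI_le (embI \<Omega> I)
       \<and> NAP_space \<Omega> (RI \<Omega> I) RI_le (embI \<Omega> I) (PI \<Omega> I w) (JI \<Omega> I)"
proof -
  have "\<Omega> \<noteq> {}" using assms(1) by auto
  then interpret fine_weighted \<Omega> I w
    using assms(2,3)
    by (simp add: fine_weighted_def fine_weighted_axioms_def maximal_ideal_FF_def fine_ideal_def)
  show ?thesis using superreal_RI NAP_RI by simp
qed

end
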